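(* Let $\mathbb{R}^m$ be endowed with a norm $\|\cdot\|$. Let $\bar A\in\mathbb{R}^{(m+1)\times n}$ have at least two different columns and let $v\in\mathbb{R}^m$. Suppose $\bar u\in F(v)$ and $x\in\Delta_{n-1}$ satisfy $\bar Ax\ne\bar u$. Then for $d:=\frac{\bar Ax-\bar u}{\|\bar Ax-\bar u\|_v}$, \[ \Phi_v(\bar A)\le\max\{\lambda:\ \exists\, y,z\in\Delta_{n-1},\ I(y)\subseteq I(x),\ \bar A(y-z)=\lambda d\}. \]
   Context: $\Delta_{n-1}=\{x\in\mathbb{R}^n_+:\sum_ix_i=1\}$; for $x\in\Delta_{n-1}$, $I(x)=\{i: x_i>0\}$. A matrix is identified with the set of its columns; $\mathrm{conv}(\bar A)=\{\bar Ax:x\in\Delta_{n-1}\}$. For $\bar w=(w,w_{m+1})\in\mathbb{R}^{m+1}$, $\|\bar w\|_v=\sqrt{\|w\|^2+|\langle v,w\rangle+w_{m+1}|}$; for nonempty $F,G\subseteq\mathbb{R}^{m+1}$, $\mathrm{dist}_v(F,G)=\min_{\bar w\in F,\bar w'\in G}\|\bar w-\bar w'\|_v$. $F(v)=\operatorname{Argmin}_{\bar w\in\mathrm{conv}(\bar A)}\langle(v,1),\bar w\rangle$, a face of $\mathrm{conv}(\bar A)$. The local facial distance is $\Phi_v(\bar A)=\min\{\mathrm{dist}_v(G,\mathrm{conv}(\bar A\setminus G)):G\text{ a face of }F(v),\ \emptyset\ne G\ne\mathrm{conv}(\bar A)\}$, where $\bar A\setminus G$ denotes the columns of $\bar A$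 not in $G$. *)

theory Defs
  imports "HOL-Analysis.Analysis"
begin

definition is_norm_fun :: "(real^'m \<Rightarrow> real) \<Rightarrow> bool" where
  "is_norm_fun N \<longleftrightarrow>
     (\<forall>x. 0 \<le> N x) \<and> (\<forall>x. N x = 0 \<longleftrightarrow> x = 0) \<and>
     (\<forall>c x. N (c *\<^sub>R x) = \<bar>c\<bar> * N x) \<and> (\<forall>x y. N (x + y) \<le> N x + N y)"

definition std_simplex :: "('n::finite \<Rightarrow> real) set" where
  "std_simplex = {x. (\<forall>i. 0 \<le> x i) \<and> sum x UNIV = 1}"

definition supp_idx :: "('n \<Rightarrow> real) \<Rightarrow> 'n set" where
  "supp_idx x = {i. 0 < x i}"

text \<open>A matrix of size (m+1) x n is represented by its columns A i :: (real^'m) \<times> real.\<close>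
definition matvec :: "('n::finite \<Rightarrow> (real^'m) \<times> real) \<Rightarrow> ('n \<Rightarrow> real) \<Rightarrow> (real^'m) \<times> real" where
  "matvec A x = (\<Sum>i\<in>UNIV. x i *\<^sub>R A i)"

definition convA :: "('n::finite \<Rightarrow> (real^'m) \<times> real) \<Rightarrow> ((real^'m) \<times> real) set" where
  "convA A = {matvec A x | x. x \<in> std_simplex}"

definition normv :: "(real^'m \<Rightarrow> real) \<Rightarrow> real^'m \<Rightarrow> (real^'m) \<times> real \<Rightarrow> real" where
  "normv N v w = sqrt ((N (fst w))\<^sup>2 + \<bar>v \<bullet> fst w + snd w\<bar>)"

text \<open>dist_v(F,G): the minimum (attained for the compact sets used here) of the v-norm distance.\<close>
definition distv :: "(real^'m \<Rightarrow> real) \<Rightarrow> real^'m \<Rightarrow> ((real^'m) \<times> real) set \<Rightarrow> ((real^'m) \<times> real) set \<Rightarrow> real" where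
  "distv N v F G = Inf {normv N v (w - w') | w w'. w \<in> F \<and> w' \<in> G}"

definition Fv :: "('n::finite \<Rightarrow> (real^'m) \<times> real) \<Rightarrow> real^'m \<Rightarrow> ((real^'m) \<times> real) set" where
  "Fv A v = {w \<in> convA A. \<forall>w' \<in> convA A. v \<bullet> fst w + snd w \<le> v \<bullet> fst w' + snd w'}"

definition Phi :: "(real^'m \<Rightarrow> real) \<Rightarrow> real^'m \<Rightarrow> ('n::finite \<Rightarrow> (real^'m) \<times> real) \<Rightarrow> real" where
  "Phi N v A = Inf {distv N v G (convex hull {A i | i. A i \<notin> G}) | G.
                     G face_of Fv A v \<and> G \<noteq> {} \<and> G \<noteq> convA A}"

end

theory Submission
  imports Defs
begin

text \<open>Among all pairs \<open>q \<in> conv {A i | i \<in> I(x)}\<close>, \<open>r \<in> F(v)\<close> whose difference is a multiple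
  \<open>t d\<close> of \<open>d\<close>, choose one maximising \<open>t\<close> (compactness). The pair \<open>(A x, u)\<close> shows
  \<open>t \<ge> \<parallel>A x - u\<parallel>\<^sub>v\<close>, and hence \<open>\<parallel>q - r\<parallel>\<^sub>v \<le> t\<close>. Let \<open>G\<close> be the smallest face of \<open>F(v)\<close>
  containing \<open>r\<close>: the points \<open>p\<close> of \<open>F(v)\<close> such that the segment from \<open>p\<close> through \<open>r\<close> can be
  prolonged beyond \<open>r\<close> inside \<open>F(v)\<close>. If a column \<open>A j\<close> carrying positive weight in \<open>q\<close> lay
  in \<open>G\<close>, pushing both \<open>q\<close> and \<open>r\<close> slightly away from \<open>A j\<close> would give an admissible pair
  with a larger \<open>t\<close>. So \<open>q\<close> lies in the convex hull of the columns outside \<open>G\<close>, and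
  \<open>\<Phi>\<^sub>v(A) \<le> dist\<^sub>v(G, conv(A \ G)) \<le> \<parallel>r - q\<parallel>\<^sub>v \<le> t\<close>.\<close>

lemma std_simplex_nonneg: "y \<in> std_simplex \<Longrightarrow> 0 \<le> y i"
  by (simp add: std_simplex_def)

lemma std_simplex_outside_supp:
  assumes "y \<in> std_simplex" "supp_idx y \<subseteq> T" "i \<notin> T"
  shows "y i = 0"
  using assms std_simplex_nonneg[OF assms(1), of i] by (force simp: supp_idx_def)

lemma matvec_in_convex_hull_supp:
  fixes A :: "'n::finite \<Rightarrow> (real^'m) \<times> real"
  assumes "y \<in> std_simplex" "supp_idx y \<subseteq> T"
  shows "matvec A y \<in> convex hull (A ` T)"
proof -
  have zero: "y i = 0" if "i \<notin> T" for i
    using std_simplex_outside_supp[OF assms that] .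
  have "matvec A y = (\<Sum>i\<in>T. y i *\<^sub>R A i)"
    unfolding matvec_def by (rule sum.mono_neutral_right) (auto simp: zero)
  moreover have "sum y T = 1"
    using assms(1) sum.mono_neutral_right[of UNIV T y] by (auto simp: std_simplex_def zero)
  then have "(\<Sum>i\<in>T. y i *\<^sub>R A i) \<in> convex hull (A ` T)"
    by (intro convex_sum) (use std_simplex_nonneg[OF assms(1)] in \<open>auto simp: hull_inc\<close>)
  ultimately show ?thesis by simp
qed

lemma convex_matvec_std_simplex_supp:
  fixes A :: "'n::finite \<Rightarrow> (real^'m) \<times> real"
  shows "convex {matvec A y | y. y \<in> std_simplex \<and> supp_idx y \<subseteq> T}"
proof (rule convexI)
  fix p1 p2 and a b :: real
  assume "p1 \<in> {matvec A y | y. y \<in> std_simplex \<and> supp_idx y \<subseteq> T}"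
    and "p2 \<in> {matvec A y | y. y \<in> std_simplex \<and> supp_idx y \<subseteq> T}"
    and ab: "0 \<le> a" "0 \<le> b" "a + b = 1"
  then obtain y1 y2 where y1: "y1 \<in> std_simplex" "supp_idx y1 \<subseteq> T" "p1 = matvec A y1"
    and y2: "y2 \<in> std_simplex" "supp_idx y2 \<subseteq> T" "p2 = matvec A y2"
    by blast
  define y where "y = (\<lambda>i. a * y1 i + b * y2 i)"
  have "y \<in> std_simplex"
    using y1 y2 ab by (auto simp: y_def std_simplex_def sum.distrib sum_distrib_left[symmetric])
  moreover have "supp_idx y \<subseteq> T"
  proof
    fix i assume "i \<in> supp_idx y"
    then have "0 < y1 i \<or> 0 < y2 i"
      using std_simplex_nonneg[OF y1(1), of i] std_simplex_nonneg[OF y2(1), of i]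
      by (auto simp: supp_idx_def y_def order_le_less)
    then show "i \<in> T" using y1(2) y2(2) by (auto simp: supp_idx_def)
  qed
  moreover have "matvec A y = a *\<^sub>R p1 + b *\<^sub>R p2"
    by (simp add: y1(3) y2(3) matvec_def y_def scaleR_add_left sum.distrib scaleR_sum_right)
  ultimately show "a *\<^sub>R p1 + b *\<^sub>R p2 \<in> {matvec A y | y. y \<in> std_simplex \<and> supp_idx y \<subseteq> T}"
    by force
qed

lemma matvec_std_simplex_supp_eq_convex_hull:
  fixes A :: "'n::finite \<Rightarrow> (real^'m) \<times> real"
  shows "{matvec A y | y. y \<in> std_simplex \<and> supp_idx y \<subseteq> T} = convex hull (A ` T)"
proof
  show "{matvec A y | y. y \<in> std_simplex \<and> supp_idx y \<subseteq> T} \<subseteq> convex hull (A ` T)"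
    using matvec_in_convex_hull_supp by blast
  have "A i \<in> {matvec A y | y. y \<in> std_simplex \<and> supp_idx y \<subseteq> T}" if "i \<in> T" for i
  proof -
    define y where "y = (\<lambda>j. if j = i then 1 else (0::real))"
    have "y \<in> std_simplex" "supp_idx y \<subseteq> T"
      using that by (auto simp: y_def std_simplex_def supp_idx_def)
    moreover have column: "(\<lambda>j. y j *\<^sub>R A j) = (\<lambda>j. if j = i then A i else 0)"
      by (auto simp: y_def)
    have "matvec A y = A i"
      unfolding matvec_def column by simp
    ultimately show ?thesis by force
  qed
  then show "convex hull (A ` T) \<subseteq> {matvec A y | y. y \<in> std_simplex \<and> supp_idx y \<subseteq> T}"
    by (intro hull_minimal convex_matvec_std_simplex_supp) blast
qed

lemma convA_eq_convex_hull:
  fixes A :: "'n::finite \<Rightarrow> (real^'m) \<times> real"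
  shows "convA A = convex hull (range A)"
  using matvec_std_simplex_supp_eq_convex_hull[of A UNIV] by (simp add: convA_def)

lemma matvec_prolong_from_column:
  fixes A :: "'n::finite \<Rightarrow> (real^'m) \<times> real"
  assumes y: "y \<in> std_simplex" and e: "0 < e" "e \<le> y j"
  shows "\<exists>y'. y' \<in> std_simplex \<and> supp_idx y' \<subseteq> supp_idx y \<and>
           matvec A y' = matvec A y + e *\<^sub>R (matvec A y - A j)"
proof (intro exI conjI)
  define y' where "y' = (\<lambda>i. (1 + e) * y i - (if i = j then e else 0))"
  have "0 \<le> y' i" for i
  proof (cases "i = j")
    case True
    have "0 \<le> e * y j" using e by simp
    then have "e \<le> y j + e * y j" using e by linarith
    then show ?thesis using True by (simp add: y'_def algebra_simps)
  qed (use std_simplex_nonneg[OF y] e in \<open>simp add: y'_def\<close>)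
  moreover have "sum y' UNIV = 1"
    using y by (simp add: y'_def std_simplex_def sum_subtractf sum_distrib_left[symmetric])
  ultimately show "y' \<in> std_simplex" by (simp add: std_simplex_def)
  show "supp_idx y' \<subseteq> supp_idx y"
    using e std_simplex_nonneg[OF y]
    by (auto simp: supp_idx_def y'_def zero_less_mult_iff split: if_splits)
  have "matvec A y' = (\<Sum>i\<in>UNIV. (1 + e) *\<^sub>R (y i *\<^sub>R A i) - (if i = j then e *\<^sub>R A i else 0))"
    unfolding matvec_def y'_def by (intro sum.cong) (auto simp: algebra_simps)
  also have "\<dots> = (1 + e) *\<^sub>R matvec A y - e *\<^sub>R A j"
    by (simp add: sum_subtractf scaleR_sum_right matvec_def)
  finally show "matvec A y' = matvec A y + e *\<^sub>R (matvec A y - A j)"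
    by (simp add: algebra_simps)
qed

definition prolongation_face :: "'a::real_vector set \<Rightarrow> 'a \<Rightarrow> 'a set" where
  "prolongation_face F r = {p \<in> F. \<exists>e>0. r + e *\<^sub>R (r - p) \<in> F}"

lemma prolongation_shorten:
  fixes F :: "'a::real_vector set"
  assumes "convex F" "r \<in> F" "r + e0 *\<^sub>R (r - p) \<in> F" "0 < e" "e \<le> e0"
  shows "r + e *\<^sub>R (r - p) \<in> F"
proof -
  have "(1 - e/e0) *\<^sub>R r + (e/e0) *\<^sub>R (r + e0 *\<^sub>R (r - p)) \<in> F"
    using assms by (intro convexD) auto
  moreover have "(1 - e/e0) *\<^sub>R r + (e/e0) *\<^sub>R (r + e0 *\<^sub>R (r - p)) = r + e *\<^sub>R (r - p)"
    using assms by (simp add: algebra_simps)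
  ultimately show ?thesis by simp
qed

lemma mem_prolongation_face_shorten:
  assumes "convex F" "r \<in> F" "p \<in> prolongation_face F r" "0 < e'"
  obtains e where "0 < e" "e \<le> e'" "r + e *\<^sub>R (r - p) \<in> F"
proof -
  obtain e0 where "0 < e0" "r + e0 *\<^sub>R (r - p) \<in> F"
    using assms(3) by (auto simp: prolongation_face_def)
  then show ?thesis
    using that[of "min e0 e'"] prolongation_shorten[OF assms(1,2)] assms(4) by auto
qed

lemma prolongation_through_open_segment:
  fixes F :: "'a::real_vector set"
  assumes "convex F" "b \<in> F" "p = (1 - s) *\<^sub>R a + s *\<^sub>R b" "0 < s" "s < 1" "0 < e"
    "r + e *\<^sub>R (r - p) \<in> F"
  shows "\<exists>e'>0. r + e' *\<^sub>R (r - a) \<in> F"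
proof (intro exI conjI)
  define k where "k = 1 + s * e"
  have k: "0 < k" using assms(4,6) by (simp add: k_def add_pos_pos)
  \<comment> \<open>\<open>r + e'(r - a)\<close> is a convex combination of \<open>r + e(r - p)\<close> and \<open>b\<close>.\<close>
  have in_F: "(1/k) *\<^sub>R (r + e *\<^sub>R (r - p)) + (s*e/k) *\<^sub>R b \<in> F"
    using assms k by (intro convexD) (auto simp: k_def field_simps)
  have "k *\<^sub>R ((1/k) *\<^sub>R (r + e *\<^sub>R (r - p)) + (s*e/k) *\<^sub>R b)
      = (r + e *\<^sub>R (r - p)) + (s*e) *\<^sub>R b"
    using k by (simp add: scaleR_add_right)
  also have "\<dots> = k *\<^sub>R r + ((1 - s) * e) *\<^sub>R (r - a)"
    by (simp add: assms(3) k_def algebra_simps)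
  also have "\<dots> = k *\<^sub>R (r + ((1 - s) * e / k) *\<^sub>R (r - a))"
    using k by (simp add: scaleR_add_right)
  finally show "r + ((1 - s) * e / k) *\<^sub>R (r - a) \<in> F" using in_F k by simp
  show "0 < (1 - s) * e / k" using assms k by simp
qed

lemma prolongation_face_face_of:
  fixes F :: "'a::real_vector set"
  assumes cF: "convex F" and rF: "r \<in> F"
  shows "prolongation_face F r face_of F"
  unfolding face_of_def
proof (intro conjI)
  show "prolongation_face F r \<subseteq> F" by (auto simp: prolongation_face_def)
  show "convex (prolongation_face F r)"
  proof (rule convexI)
    fix p1 p2 and a b :: real
    assume p: "p1 \<in> prolongation_face F r" "p2 \<in> prolongation_face F r"
      and ab: "0 \<le> a" "0 \<le> b" "a + b = 1"
    obtain e1 where e1: "0 < e1" "r + e1 *\<^sub>R (r - p1) \<in> F"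
      using p(1) by (auto simp: prolongation_face_def)
    obtain e where e: "0 < e" "e \<le> e1" "r + e *\<^sub>R (r - p2) \<in> F"
      using mem_prolongation_face_shorten[OF cF rF p(2) e1(1)] .
    have "r + e *\<^sub>R (r - p1) \<in> F" using prolongation_shorten[OF cF rF e1(2) e(1,2)] .
    then have "a *\<^sub>R (r + e *\<^sub>R (r - p1)) + b *\<^sub>R (r + e *\<^sub>R (r - p2)) \<in> F"
      using e(3) ab cF by (intro convexD) auto
    moreover have "a *\<^sub>R (r + e *\<^sub>R (r - p1)) + b *\<^sub>R (r + e *\<^sub>R (r - p2))
        = r + e *\<^sub>R (r - (a *\<^sub>R p1 + b *\<^sub>R p2))"
    proof -
      have b: "b = 1 - a" using ab by simp
      show ?thesis unfolding b by (simp add: algebra_simps)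
    qed
    moreover have "a *\<^sub>R p1 + b *\<^sub>R p2 \<in> F"
      using p ab cF by (intro convexD) (auto simp: prolongation_face_def)
    ultimately show "a *\<^sub>R p1 + b *\<^sub>R p2 \<in> prolongation_face F r"
      using e(1) by (auto simp: prolongation_face_def)
  qed
  show "\<forall>a\<in>F. \<forall>b\<in>F. \<forall>p\<in>prolongation_face F r. p \<in> open_segment a b \<longrightarrow>
          a \<in> prolongation_face F r \<and> b \<in> prolongation_face F r"
  proof (intro ballI impI)
    fix a b p
    assume a: "a \<in> F" and b: "b \<in> F" and p: "p \<in> prolongation_face F r"
      and seg: "p \<in> open_segment a b"
    obtain e where e: "0 < e" "r + e *\<^sub>R (r - p) \<in> F"
      using p by (auto simp: prolongation_face_def)
    obtain s where s: "0 < s" "s < 1" "p = (1 - s) *\<^sub>R a + s *\<^sub>R b"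
      using seg by (auto simp: in_segment)
    have "\<exists>e'>0. r + e' *\<^sub>R (r - a) \<in> F"
      using prolongation_through_open_segment[OF cF b s(3,1,2) e] .
    moreover have "\<exists>e'>0. r + e' *\<^sub>R (r - b) \<in> F"
      by (rule prolongation_through_open_segment[OF cF a _ _ _ e, of "1 - s"])
         (use s in \<open>auto simp: algebra_simps\<close>)
    ultimately show "a \<in> prolongation_face F r \<and> b \<in> prolongation_face F r"
      using a b by (auto simp: prolongation_face_def)
  qed
qed

lemma mem_prolongation_face_self: "r \<in> F \<Longrightarrow> r \<in> prolongation_face F r"
  by (auto simp: prolongation_face_def intro: exI[of _ 1])

lemma exists_max_parallel_difference:
  fixes d :: "'a::real_inner"
  assumes "compact Q" "compact F" "q0 \<in> Q" "r0 \<in> F" "q0 - r0 = c *\<^sub>R d" "d \<noteq> 0"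
  obtains q r t where "q \<in> Q" "r \<in> F" "q - r = t *\<^sub>R d" "c \<le> t"
    "\<And>q' r' t'. q' \<in> Q \<Longrightarrow> r' \<in> F \<Longrightarrow> q' - r' = t' *\<^sub>R d \<Longrightarrow> t' \<le> t"
proof -
  define C where "C = (Q \<times> F) \<inter> {z. fst z - snd z = (((fst z - snd z) \<bullet> d) / (d \<bullet> d)) *\<^sub>R d}"
  have dd: "0 < d \<bullet> d" using assms(6) by simp
  have C_iff: "(q, r) \<in> C \<longleftrightarrow> q \<in> Q \<and> r \<in> F \<and> (\<exists>t. q - r = t *\<^sub>R d)" for q r
    using dd by (auto simp: C_def)
  have "compact C" unfolding C_def
    by (intro compact_Int_closed compact_Times assms(1,2) closed_Collect_eq continuous_intros)
       (use dd in auto)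
  moreover have "C \<noteq> {}" using assms C_iff by blast
  moreover have "continuous_on C (\<lambda>z. (fst z - snd z) \<bullet> d)" by (intro continuous_intros)
  ultimately obtain z where z: "z \<in> C" "\<forall>z'\<in>C. (fst z' - snd z') \<bullet> d \<le> (fst z - snd z) \<bullet> d"
    using continuous_attains_sup by blast
  obtain t where t: "fst z \<in> Q" "snd z \<in> F" "fst z - snd z = t *\<^sub>R d"
    using z(1) C_iff[of "fst z" "snd z"] by auto
  have le: "t' \<le> t" if "q' \<in> Q" "r' \<in> F" "q' - r' = t' *\<^sub>R d" for q' r' t'
    using z(2) C_iff[of q' r'] that t(3) dd by force
  show ?thesis by (rule that[OF t le[OF assms(3,4,5)]]) (fact le)
qed

text \<open>Moving both \<open>q\<close> and \<open>r\<close> away from \<open>a\<close> by the same factor \<open>e\<close> multiplies their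
  difference by \<open>1 + e\<close>, contradicting maximality.\<close>

lemma not_in_prolongation_face_of_maximal:
  fixes F :: "'a::real_vector set"
  assumes cQ: "convex Q" and cF: "convex F" and q: "q \<in> Q" and r: "r \<in> F"
    and qr: "q - r = t *\<^sub>R d" and t: "0 < t"
    and max: "\<And>q' r' t'. q' \<in> Q \<Longrightarrow> r' \<in> F \<Longrightarrow> q' - r' = t' *\<^sub>R d \<Longrightarrow> t' \<le> t"
    and e0: "0 < e0" "q + e0 *\<^sub>R (q - a) \<in> Q"
  shows "a \<notin> prolongation_face F r"
proof
  assume "a \<in> prolongation_face F r"
  then obtain e where e: "0 < e" "e \<le> e0" "r + e *\<^sub>R (r - a) \<in> F"
    using mem_prolongation_face_shorten[OF cF r _ e0(1)] by blast
  have "q + e *\<^sub>R (q - a) \<in> Q" using prolongation_shorten[OF cQ q e0(2) e(1,2)] .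
  moreover have "q = r + t *\<^sub>R d" using qr by (simp add: algebra_simps)
  then have "(q + e *\<^sub>R (q - a)) - (r + e *\<^sub>R (r - a)) = ((1 + e) * t) *\<^sub>R d"
    by (simp add: algebra_simps)
  ultimately have "(1 + e) * t \<le> t" using max e(3) by blast
  then show False using mult_pos_pos[OF e(1) t] by (simp add: algebra_simps)
qed

lemma Fv_subset_convA: "Fv A v \<subseteq> convA A"
  by (auto simp: Fv_def)

lemma Fv_eq_Inter_halfspaces:
  "Fv A v = convA A \<inter> (\<Inter>w'\<in>convA A. {p. (v, 1) \<bullet> p \<le> (v, 1) \<bullet> w'})"
  by (auto simp: Fv_def inner_prod_def)

lemma convex_Fv:
  fixes A :: "'n::finite \<Rightarrow> (real^'m) \<times> real"
  shows "convex (Fv A v)"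
  unfolding Fv_eq_Inter_halfspaces
  by (intro convex_Int convex_INT convex_halfspace_le) (simp add: convA_eq_convex_hull)

lemma compact_Fv:
  fixes A :: "'n::finite \<Rightarrow> (real^'m) \<times> real"
  shows "compact (Fv A v)"
  unfolding Fv_eq_Inter_halfspaces
  by (intro compact_Int_closed closed_INT ballI closed_halfspace_le)
     (simp add: convA_eq_convex_hull compact_convex_hull finite_imp_compact)

lemma normv_pos:
  assumes "is_norm_fun N" "w \<noteq> 0"
  shows "0 < normv N v w"
proof (cases "fst w = 0")
  case True
  then have "snd w \<noteq> 0" using assms(2) by (simp add: prod_eq_iff)
  moreover have "N 0 = 0" using assms(1) by (simp add: is_norm_fun_def)
  ultimately show ?thesis using True by (simp add: normv_def)
next
  case False
  then have "0 < N (fst w)" using assms(1) unfolding is_norm_fun_def by (metis order_le_less)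
  then show ?thesis by (simp add: normv_def add_pos_nonneg)
qed

lemma normv_minus_commute:
  assumes "is_norm_fun N"
  shows "normv N v (a - b) = normv N v (b - a)"
proof -
  have "N (- x) = N x" for x
    using assms unfolding is_norm_fun_def by (metis abs_minus_cancel abs_one mult_1 scaleR_minus1_left)
  then have "N (fst b - fst a) = N (fst a - fst b)" by (metis minus_diff_eq)
  then show ?thesis
    by (simp add: normv_def inner_diff_right abs_minus_commute algebra_simps)
qed

text \<open>Only for \<open>k \<ge> 1\<close>: the affine part of \<open>\<parallel>\<cdot>\<parallel>\<^sub>v\<close> enters without a square.\<close>

lemma normv_scaleR_le:
  assumes N: "is_norm_fun N" and k: "1 \<le> k"
  shows "normv N v (k *\<^sub>R w) \<le> k * normv N v w"
proof -
  define a where "a = N (fst w)"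
  define b where "b = \<bar>v \<bullet> fst w + snd w\<bar>"
  have "N (k *\<^sub>R fst w) = k * a" using N k by (simp add: is_norm_fun_def a_def)
  moreover have "\<bar>v \<bullet> (k *\<^sub>R fst w) + k * snd w\<bar> = k * b"
    using k by (simp add: b_def abs_mult flip: distrib_left)
  ultimately have "normv N v (k *\<^sub>R w) = sqrt ((k * a)\<^sup>2 + k * b)"
    by (simp add: normv_def)
  also have "\<dots> \<le> sqrt (k\<^sup>2 * (a\<^sup>2 + b))"
    using k mult_right_mono[of k "k\<^sup>2" b]
    by (intro real_sqrt_le_mono) (simp add: b_def power2_eq_square algebra_simps)
  also have "\<dots> = k * normv N v w"
    using k by (simp add: real_sqrt_mult a_def b_def normv_def)
  finally show ?thesis .
qed

lemma distv_le:
  assumes "p \<in> G" "p' \<in> H"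
  shows "distv N v G H \<le> normv N v (p - p')"
proof -
  have "normv N v (p - p') \<in> {normv N v (w - w') | w w'. w \<in> G \<and> w' \<in> H}"
    using assms by blast
  then show ?thesis
    unfolding distv_def by (rule cInf_lower) (auto intro!: bdd_belowI[of _ 0] simp: normv_def)
qed

lemma distv_nonneg:
  assumes "G \<noteq> {}" "H \<noteq> {}"
  shows "0 \<le> distv N v G H"
  unfolding distv_def by (rule cInf_greatest) (use assms in \<open>auto simp: normv_def\<close>)

lemma columns_outside_face_nonempty:
  fixes A :: "'n::finite \<Rightarrow> (real^'m) \<times> real"
  assumes "G face_of Fv A v" "G \<noteq> convA A"
  shows "{A i | i. A i \<notin> G} \<noteq> {}"
proof
  assume "{A i | i. A i \<notin> G} = {}"
  then have "range A \<subseteq> G" by blast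
  then have "convex hull (range A) \<subseteq> G"
    using face_of_imp_convex[OF assms(1)] by (rule hull_minimal)
  moreover have "G \<subseteq> convA A"
    using face_of_imp_subset[OF assms(1)] Fv_subset_convA by blast
  ultimately show False
    using assms(2) by (simp add: convA_eq_convex_hull)
qed

lemma Phi_le_distv:
  fixes A :: "'n::finite \<Rightarrow> (real^'m) \<times> real"
  assumes "G face_of Fv A v" "G \<noteq> {}" "G \<noteq> convA A"
  shows "Phi N v A \<le> distv N v G (convex hull {A i | i. A i \<notin> G})"
  unfolding Phi_def
proof (rule cInf_lower)
  show "distv N v G (convex hull {A i | i. A i \<notin> G}) \<in> {distv N v G (convex hull {A i | i. A i \<notin> G}) | G.
          G face_of Fv A v \<and> G \<noteq> {} \<and> G \<noteq> convA A}"
    using assms by blast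
  have "0 \<le> distv N v G' (convex hull {A i | i. A i \<notin> G'})"
    if "G' face_of Fv A v" "G' \<noteq> {}" "G' \<noteq> convA A" for G'
    by (rule distv_nonneg[OF that(2)])
       (use columns_outside_face_nonempty[OF that(1,3)] in \<open>simp add: convex_hull_eq_empty\<close>)
  then show "bdd_below {distv N v G (convex hull {A i | i. A i \<notin> G}) | G.
          G face_of Fv A v \<and> G \<noteq> {} \<and> G \<noteq> convA A}"
    by (auto intro!: bdd_belowI[of _ 0])
qed

lemma Phi_le_normv:
  fixes A :: "'n::finite \<Rightarrow> (real^'m) \<times> real"
  assumes G: "G face_of Fv A v" and r: "r \<in> G" and y: "y \<in> std_simplex"
    and off: "\<And>j. 0 < y j \<Longrightarrow> A j \<notin> G"
  shows "Phi N v A \<le> normv N v (r - matvec A y)"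
proof -
  obtain j where "0 < y j"
    using y sum_nonpos[of UNIV y] by (force simp: std_simplex_def not_less)
  then have "G \<noteq> convA A"
    using off by (auto simp: convA_eq_convex_hull hull_inc)
  then have "Phi N v A \<le> distv N v G (convex hull {A i | i. A i \<notin> G})"
    using Phi_le_distv[OF G] r by blast
  moreover have "A ` supp_idx y \<subseteq> {A i | i. A i \<notin> G}"
    using off by (auto simp: supp_idx_def)
  then have "matvec A y \<in> convex hull {A i | i. A i \<notin> G}"
    using matvec_in_convex_hull_supp[OF y order_refl, of A] hull_mono by blast
  ultimately show ?thesis using distv_le[OF r] order_trans by blast
qed

lemma bdd_above_parallel_differences:
  fixes A :: "'n::finite \<Rightarrow> (real^'m) \<times> real"
  assumes "d \<noteq> 0"
  shows "bdd_above {t. \<exists>y z. y \<in> std_simplex \<and> z \<in> std_simplex \<and> P y \<and>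
                  matvec A y - matvec A z = t *\<^sub>R d}"
proof -
  have "compact (convA A)"
    by (simp add: convA_eq_convex_hull compact_convex_hull finite_imp_compact)
  then obtain M where M: "\<And>p. p \<in> convA A \<Longrightarrow> norm p \<le> M"
    by (meson compact_imp_bounded bounded_iff)
  have "t \<le> 2 * M / norm d"
    if "y \<in> std_simplex" "z \<in> std_simplex" "matvec A y - matvec A z = t *\<^sub>R d" for t y z
  proof -
    have "\<bar>t\<bar> * norm d \<le> norm (matvec A y) + norm (matvec A z)"
      using norm_triangle_ineq4[of "matvec A y" "matvec A z"] that(3) by simp
    also have "\<dots> \<le> 2 * M"
    proof -
      have "matvec A y \<in> convA A" "matvec A z \<in> convA A"
        using that(1,2) by (auto simp: convA_def)
      then show ?thesis using M[of "matvec A y"] M[of "matvec A z"] by linarith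
    qed
    finally have "\<bar>t\<bar> \<le> 2 * M / norm d" using assms by (simp add: field_simps)
    then show ?thesis by simp
  qed
  then show ?thesis by (auto intro!: bdd_aboveI)
qed

lemma Phi_le_normv_of_maximal_pair:
  fixes A :: "'n::finite \<Rightarrow> (real^'m) \<times> real"
  assumes y: "y \<in> std_simplex" "supp_idx y \<subseteq> S" and r: "r \<in> Fv A v"
    and yr: "matvec A y - r = t *\<^sub>R d" and t: "0 < t"
    and max: "\<And>q' r' t'. q' \<in> convex hull (A ` S) \<Longrightarrow> r' \<in> Fv A v \<Longrightarrow> q' - r' = t' *\<^sub>R d \<Longrightarrow> t' \<le> t"
  shows "Phi N v A \<le> normv N v (r - matvec A y)"
proof (rule Phi_le_normv[OF prolongation_face_face_of[OF convex_Fv r]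
      mem_prolongation_face_self[OF r] y(1)])
  fix j assume yj: "0 < y j"
  obtain y' where "y' \<in> std_simplex" "supp_idx y' \<subseteq> S"
    "matvec A y' = matvec A y + y j *\<^sub>R (matvec A y - A j)"
    using matvec_prolong_from_column[OF y(1) yj order_refl, of A] y(2) by blast
  then have prolonged: "matvec A y + y j *\<^sub>R (matvec A y - A j) \<in> convex hull (A ` S)"
    using matvec_in_convex_hull_supp by metis
  show "A j \<notin> prolongation_face (Fv A v) r"
    by (rule not_in_prolongation_face_of_maximal[OF convex_convex_hull convex_Fv
          matvec_in_convex_hull_supp[OF y] r yr t _ yj prolonged]) (fact max)
qed

theorem lemma1:
  fixes N :: "real^'m \<Rightarrow> real"
    and A :: "'n::finite \<Rightarrow> (real^'m) \<times> real"
    and v :: "real^'m" and u :: "(real^'m) \<times> real" and x :: "'n \<Rightarrow> real"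
  assumes "is_norm_fun N"
    and "\<exists>i j. A i \<noteq> A j"
    and "u \<in> Fv A v"
    and "x \<in> std_simplex"
    and "matvec A x \<noteq> u"
  shows "Phi N v A \<le>
           Sup {t. \<exists>y z. y \<in> std_simplex \<and> z \<in> std_simplex \<and> supp_idx y \<subseteq> supp_idx x \<and>
                  matvec A y - matvec A z =
                    t *\<^sub>R ((1 / normv N v (matvec A x - u)) *\<^sub>R (matvec A x - u))}"
proof -
  define c where "c = normv N v (matvec A x - u)"
  define d where "d = (1 / c) *\<^sub>R (matvec A x - u)"
  define Q where "Q = convex hull (A ` supp_idx x)"
  have c: "0 < c" using normv_pos[OF assms(1)] assms(5) by (simp add: c_def)
  have x: "matvec A x \<in> Q" "matvec A x - u = c *\<^sub>R d" and d: "d \<noteq> 0"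
    using matvec_in_convex_hull_supp[OF assms(4) order_refl] assms(5) c by (auto simp: Q_def d_def)
  obtain q r t where qr: "q \<in> Q" "r \<in> Fv A v" "q - r = t *\<^sub>R d" "c \<le> t"
    and max: "\<And>q' r' t'. q' \<in> Q \<Longrightarrow> r' \<in> Fv A v \<Longrightarrow> q' - r' = t' *\<^sub>R d \<Longrightarrow> t' \<le> t"
    using exists_max_parallel_difference[OF _ compact_Fv x(1) assms(3) x(2) d]
    by (metis Q_def compact_convex_hull finite_imageI finite_imp_compact finite)
  obtain y where y: "y \<in> std_simplex" "supp_idx y \<subseteq> supp_idx x" "matvec A y = q"
    using qr(1) unfolding Q_def matvec_std_simplex_supp_eq_convex_hull[symmetric] by blast
  have "Phi N v A \<le> normv N v (r - q)"
    using Phi_le_normv_of_maximal_pair[OF y(1,2) qr(2) _ _ max[unfolded Q_def]] y(3) qr(3,4) c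
    by simp
  also have "\<dots> = normv N v ((t / c) *\<^sub>R (matvec A x - u))"
    using normv_minus_commute[OF assms(1)] qr(3) by (simp add: d_def)
  also have "\<dots> \<le> (t / c) * normv N v (matvec A x - u)"
    using c qr(4) by (intro normv_scaleR_le[OF assms(1)]) simp
  also have "\<dots> = t" using c by (simp add: c_def)
  also have "\<dots> \<le> Sup {t. \<exists>y z. y \<in> std_simplex \<and> z \<in> std_simplex \<and> supp_idx y \<subseteq> supp_idx x \<and>
                  matvec A y - matvec A z = t *\<^sub>R d}"
    using y qr(2,3) Fv_subset_convA
    by (intro cSup_upper bdd_above_parallel_differences d) (force simp: convA_def)
  finally show ?thesis by (simp add: d_def c_def)
qed

end
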